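(* Let $\mathfrak{g}$ be a finite-dimensional complex nilpotent Lie algebra which is not a pre-Engel-$4$ Lie algebra. Then $\mathfrak{g}$ does not admit a periodic prederivation.
   Context: A Lie algebra $\mathfrak{g}$ is a pre-Engel-$4$ Lie algebra if the linear span of $\{x\in\mathfrak{g}\mid \mathrm{ad}(x)^4=0\}$ equals $\mathfrak{g}$. A linear map $P:\mathfrak{g}\to\mathfrak{g}$ is a prederivation if $P([x,[y,z]])=[P(x),[y,z]]+[x,[P(y),z]]+[x,[y,P(z)]]$ for all $x,y,z\in\mathfrak{g}$; it is periodic if $P^m=\mathrm{id}$ for some integer $m\ge 1$. *)

theory Defs
  imports Complex_Main
begin

definition complex_lie_algebra ::
  "(complex \<Rightarrow> 'a::ab_group_add \<Rightarrow> 'a) \<Rightarrow> ('a \<Rightarrow> 'a \<Rightarrow> 'a) \<Rightarrow> bool" where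
  "complex_lie_algebra sc br \<longleftrightarrow>
     vector_space sc \<and>
     (\<forall>x. Vector_Spaces.linear sc sc (br x)) \<and>
     (\<forall>y. Vector_Spaces.linear sc sc (\<lambda>x. br x y)) \<and>
     (\<forall>x. br x x = 0) \<and>
     (\<forall>x y z. br x (br y z) + br y (br z x) + br z (br x y) = 0)"

definition finite_dim :: "(complex \<Rightarrow> 'a::ab_group_add \<Rightarrow> 'a) \<Rightarrow> bool" where
  "finite_dim sc \<longleftrightarrow> (\<exists>B. finite_dimensional_vector_space sc B)"

text \<open>Lower central series: g^1 = g (index 0 here), g^{k+1} = [g, g^k].\<close>
fun lower_central ::
  "(complex \<Rightarrow> 'a::ab_group_add \<Rightarrow> 'a) \<Rightarrow> ('a \<Rightarrow> 'a \<Rightarrow> 'a) \<Rightarrow> nat \<Rightarrow> 'a set" where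
  "lower_central sc br 0 = UNIV"
| "lower_central sc br (Suc k) =
     module.span sc {br x y | x y. y \<in> lower_central sc br k}"

definition nilpotent_lie ::
  "(complex \<Rightarrow> 'a::ab_group_add \<Rightarrow> 'a) \<Rightarrow> ('a \<Rightarrow> 'a \<Rightarrow> 'a) \<Rightarrow> bool" where
  "nilpotent_lie sc br \<longleftrightarrow> (\<exists>k. lower_central sc br k = {0})"

definition pre_engel4 ::
  "(complex \<Rightarrow> 'a::ab_group_add \<Rightarrow> 'a) \<Rightarrow> ('a \<Rightarrow> 'a \<Rightarrow> 'a) \<Rightarrow> bool" where
  "pre_engel4 sc br \<longleftrightarrow> module.span sc {x. (br x ^^ 4) = (\<lambda>_. 0)} = UNIV"

definition prederivation ::
  "(complex \<Rightarrow> 'a::ab_group_add \<Rightarrow> 'a) \<Rightarrow> ('a \<Rightarrow> 'a \<Rightarrow> 'a) \<Rightarrow> ('a \<Rightarrow> 'a) \<Rightarrow> bool" where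
  "prederivation sc br P \<longleftrightarrow>
     Vector_Spaces.linear sc sc P \<and>
     (\<forall>x y z. P (br x (br y z)) =
        br (P x) (br y z) + br x (br (P y) z) + br x (br y (P z)))"

definition periodic :: "('a \<Rightarrow> 'a) \<Rightarrow> bool" where
  "periodic P \<longleftrightarrow> (\<exists>m::nat. m \<ge> 1 \<and> P ^^ m = id)"

end

theory Submission
  imports Defs
begin

text \<open>
A linear map \<open>P\<close> with \<open>P\<^sup>m = id\<close> is diagonalisable with eigenvalues of modulus 1:
averaging \<open>c\<^sup>-\<^sup>k P\<^sup>k\<close> over \<open>k < m\<close> projects onto the \<open>c\<close>-eigenspace, and the projections
for the \<open>m\<close>-th roots of unity sum to the identity. If \<open>P\<close> is moreover a prederivation and
\<open>P x = z x\<close>, \<open>P y = e y\<close>, then \<open>P[x,[x,y]] = [Px,[x,y]] + [x,[Px,y]] + [x,[x,Py]]\<close> shows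
that \<open>ad(x)\<^sup>2 y\<close> is an eigenvector for \<open>2z + e\<close>, so \<open>ad(x)\<^sup>4 y\<close> is one for \<open>4z + e\<close>, whose
modulus is at least 3. Hence \<open>ad(x)\<^sup>4 y = 0\<close>; as the eigenvectors span, \<open>ad(x)\<^sup>4 = 0\<close> for
every eigenvector \<open>x\<close>, and the Lie algebra is pre-Engel-4.
\<close>

lemma linear_funpow:
  assumes "Vector_Spaces.linear s s f"
  shows "Vector_Spaces.linear s s (f ^^ n)"
proof (induction n)
  case 0
  interpret Vector_Spaces.linear s s f by (fact assms)
  show ?case using vs1.linear_id by (simp add: id_def)
next
  case (Suc n)
  then show ?case
    unfolding funpow.simps(2) by (rule Vector_Spaces.linear_compose[OF _ assms])
qed

lemma cis_pow_neq_1: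
  assumes "0 < k" "k < n"
  shows "cis (2 * pi / real n) ^ k \<noteq> 1"
proof
  assume "cis (2 * pi / real n) ^ k = 1"
  then have "cis (2 * pi * real k / real n) = cis (2 * pi * real 0 / real n)"
    by (simp add: DeMoivre mult_ac)
  moreover have "inj_on (\<lambda>k. cis (2 * pi * real k / real n)) {..<n}"
    using bij_betw_roots_unity[of n] assms by (simp add: bij_betw_def)
  ultimately have "k = 0" using assms by (auto simp del: of_nat_0 dest: inj_onD)
  then show False using assms by simp
qed

lemma cis_pow_eq_1: "0 < n \<Longrightarrow> cis (2 * pi / real n) ^ n = 1"
  by (simp add: DeMoivre)

lemma sum_powers_root_unity:
  fixes d :: "'a::field"
  assumes "d ^ m = 1" "d \<noteq> 1"
  shows "(\<Sum>j<m. d ^ j) = 0"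
  using assms by (simp add: geometric_sum)

definition periodic_eigenprojection ::
  "('k::field \<Rightarrow> 'a::ab_group_add \<Rightarrow> 'a) \<Rightarrow> ('a \<Rightarrow> 'a) \<Rightarrow> nat \<Rightarrow> 'k \<Rightarrow> 'a \<Rightarrow> 'a" where
  "periodic_eigenprojection scale f m c v =
     scale (1 / of_nat m) (\<Sum>k<m. scale (inverse c ^ k) ((f ^^ k) v))"

lemma linear_funpow_eigenvector:
  assumes "Vector_Spaces.linear scale scale f" "f x = scale c x"
  shows "(f ^^ n) x = scale (c ^ n) x"
proof -
  interpret Vector_Spaces.linear scale scale f by fact
  show ?thesis by (induction n) (simp_all add: assms(2) scale mult.commute)
qed

lemma periodic_linear_eigenvalue_root_unity:
  assumes "Vector_Spaces.linear scale scale f" "f ^^ m = id" "f x = scale c x" "x \<noteq> 0"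
  shows "c ^ m = 1"
proof -
  interpret Vector_Spaces.linear scale scale f by fact
  have "scale (c ^ m) x = scale 1 x"
    using linear_funpow_eigenvector[OF assms(1,3), of m] assms(2) by simp
  then show ?thesis using vs1.scale_right_imp_eq[OF assms(4)] by blast
qed

lemma periodic_eigenprojection_eigenvector:
  assumes "Vector_Spaces.linear scale scale f" "f ^^ m = id" "0 < m" "c ^ m = 1"
  shows "f (periodic_eigenprojection scale f m c v) = scale c (periodic_eigenprojection scale f m c v)"
proof -
  interpret Vector_Spaces.linear scale scale f by fact
  define g where "g k = scale (inverse c ^ k) ((f ^^ k) v)" for k
  have "c \<noteq> 0" using assms(3,4) by (auto simp: power_0_left)
  have "g m = g 0"
    using assms(2,4) by (simp add: g_def power_inverse)
  have "(\<Sum>k<m. g (Suc k)) + g 0 = (\<Sum>k<Suc m. g k)"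
    by (simp only: sum.lessThan_Suc_shift) (rule add.commute)
  also have "\<dots> = (\<Sum>k<m. g k) + g 0"
    using \<open>g m = g 0\<close> by simp
  finally have shift: "(\<Sum>k<m. g (Suc k)) = (\<Sum>k<m. g k)"
    by simp
  have fg: "f (g k) = scale c (g (Suc k))" for k
  proof -
    have "c * inverse c ^ Suc k = inverse c ^ k"
      using \<open>c \<noteq> 0\<close> by simp
    then show ?thesis
      unfolding g_def scale vs1.scale_scale by simp
  qed
  have "f (\<Sum>k<m. g k) = scale c (\<Sum>k<m. g k)"
    by (simp add: sum fg shift flip: vs1.scale_sum_right)
  then show ?thesis
    unfolding periodic_eigenprojection_def g_def[symmetric] scale vs1.scale_scale
    by (simp add: mult.commute)
qed

lemma sum_periodic_eigenprojections:
  fixes scale :: "'k::field_char_0 \<Rightarrow> 'a::ab_group_add \<Rightarrow> 'a"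
  assumes "vector_space scale" "f ^^ m = id" "0 < m"
    and "w ^ m = 1" "\<And>k. 0 < k \<Longrightarrow> k < m \<Longrightarrow> w ^ k \<noteq> 1"
  shows "(\<Sum>j<m. periodic_eigenprojection scale f m (w ^ j) v) = v"
proof -
  interpret vector_space scale by fact
  have char_sum: "(\<Sum>j<m. inverse (w ^ j) ^ k) = (if k = 0 then of_nat m else 0)"
    if "k < m" for k
  proof (cases "k = 0")
    case False
    have "(\<Sum>j<m. inverse (w ^ j) ^ k) = (\<Sum>j<m. inverse (w ^ k) ^ j)"
      by (simp add: power_inverse flip: power_mult mult.commute)
    also have "\<dots> = 0"
    proof (rule sum_powers_root_unity)
      show "inverse (w ^ k) ^ m = 1"
        using assms(4) by (metis inverse_1 power_inverse power_mult mult.commute power_one)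
      show "inverse (w ^ k) \<noteq> 1"
        using assms(5)[of k] False that by simp
    qed
    finally show ?thesis using False by simp
  qed simp
  have "(\<Sum>j<m. periodic_eigenprojection scale f m (w ^ j) v)
      = scale (1 / of_nat m) (\<Sum>k<m. scale (\<Sum>j<m. inverse (w ^ j) ^ k) ((f ^^ k) v))"
    unfolding periodic_eigenprojection_def scale_sum_left
    by (subst sum.swap) (simp add: scale_sum_right)
  also have "\<dots> = scale (1 / of_nat m) (\<Sum>k<m. if k = 0 then scale (of_nat m) v else 0)"
    by (intro arg_cong[where f="scale _"] sum.cong) (auto simp: char_sum)
  also have "\<dots> = v" using assms(3) by simp
  finally show ?thesis .
qed

lemma periodic_linear_eigenvectors_span:
  fixes scale :: "complex \<Rightarrow> 'a::ab_group_add \<Rightarrow> 'a"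
  assumes "Vector_Spaces.linear scale scale f" "f ^^ m = id" "0 < m"
  shows "module.span scale {x. \<exists>c. f x = scale c x} = UNIV"
proof -
  interpret Vector_Spaces.linear scale scale f by fact
  define w where "w = cis (2 * pi / real m)"
  have "w ^ m = 1" "\<And>k. 0 < k \<Longrightarrow> k < m \<Longrightarrow> w ^ k \<noteq> 1"
    using assms(3) cis_pow_eq_1 cis_pow_neq_1 by (simp_all add: w_def)
  then have decomposition: "(\<Sum>j<m. periodic_eigenprojection scale f m (w ^ j) v) = v" for v
    by (rule sum_periodic_eigenprojections[OF vs1.vector_space_axioms assms(2,3)])
  have "(w ^ j) ^ m = 1" for j
    using \<open>w ^ m = 1\<close> by (metis power_mult mult.commute power_one)
  then have "periodic_eigenprojection scale f m (w ^ j) v \<in> {x. \<exists>c. f x = scale c x}" for j v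
    using periodic_eigenprojection_eigenvector[OF assms] by blast
  then have "(\<Sum>j<m. periodic_eigenprojection scale f m (w ^ j) v) \<in> vs1.span {x. \<exists>c. f x = scale c x}"
    for v by (intro vs1.span_sum vs1.span_base)
  then show ?thesis
    unfolding decomposition by blast
qed

context
  fixes sc :: "complex \<Rightarrow> 'a::ab_group_add \<Rightarrow> 'a" and br :: "'a \<Rightarrow> 'a \<Rightarrow> 'a"
  assumes lie: "complex_lie_algebra sc br"
begin

lemma lie_vector_space: "vector_space sc"
  using lie unfolding complex_lie_algebra_def by blast

lemma linear_bracket_left: "Vector_Spaces.linear sc sc (\<lambda>x. br x y)"
  and linear_bracket_right: "Vector_Spaces.linear sc sc (br x)"
  using lie unfolding complex_lie_algebra_def by auto

lemma prederivation_eigenvalue_ad_even_power: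
  assumes "prederivation sc br P" "P x = sc z x" "P y = sc e y"
  shows "P ((br x ^^ (2 * k)) y) = sc (of_nat (2 * k) * z + e) ((br x ^^ (2 * k)) y)"
proof (induction k)
  case 0
  then show ?case using assms(3) by simp
next
  case (Suc k)
  interpret V: vector_space sc by (rule lie_vector_space)
  interpret left: Vector_Spaces.linear sc sc "\<lambda>u. br u v" for v by (rule linear_bracket_left)
  interpret right: Vector_Spaces.linear sc sc "br u" for u by (rule linear_bracket_right)
  define u where "u = (br x ^^ (2 * k)) y"
  have "P (br x (br x u)) = br (P x) (br x u) + br x (br (P x) u) + br x (br x (P u))"
    using assms(1) unfolding prederivation_def by blast
  also have "\<dots> = sc (z + z + (of_nat (2 * k) * z + e)) (br x (br x u))"
    using Suc assms(2) unfolding u_def[symmetric]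
    by (simp only: left.scale right.scale) (simp only: V.scale_left_distrib)
  also have "z + z + (of_nat (2 * k) * z + e) = of_nat (2 * Suc k) * z + e"
    by (simp add: algebra_simps)
  finally show ?case
    by (simp add: u_def)
qed

lemma periodic_prederivation_eigenvector_ad4:
  assumes "prederivation sc br P" "P ^^ m = id" "0 < m" "P x = sc z x"
  shows "br x ^^ 4 = (\<lambda>_. 0)"
proof
  interpret left: Vector_Spaces.linear sc sc "\<lambda>u. br u v" for v by (rule linear_bracket_left)
  interpret ad4: Vector_Spaces.linear sc sc "br x ^^ 4"
    by (rule linear_funpow[OF linear_bracket_right])
  have P: "Vector_Spaces.linear sc sc P"
    using assms(1) unfolding prederivation_def by blast
  have unimodular: "norm c = 1" if "P v = sc c v" "v \<noteq> 0" for v c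
    using power_eq_1_iff[OF periodic_linear_eigenvalue_root_unity[OF P assms(2) that]] assms(3)
    by simp
  have on_eigenvectors: "(br x ^^ 4) y = 0" if "P y = sc e y" for y e
  proof (rule ccontr)
    assume nonzero: "(br x ^^ 4) y \<noteq> 0"
    then have "x \<noteq> 0" "y \<noteq> 0"
      using ad4.zero by (auto simp: numeral_eq_Suc left.zero)
    then have "norm z = 1" "norm e = 1"
      using unimodular assms(4) that by blast+
    have "P ((br x ^^ 4) y) = sc (4 * z + e) ((br x ^^ 4) y)"
      using prederivation_eigenvalue_ad_even_power[OF assms(1,4) that, of 2] by simp
    then have "norm (4 * z + e) = 1"
      using unimodular nonzero by blast
    moreover have "norm (4 * z) - norm e \<le> norm (4 * z + e)"
      by (rule norm_diff_ineq)
    ultimately show False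
      using \<open>norm z = 1\<close> \<open>norm e = 1\<close> by (simp add: norm_mult)
  qed
  fix y
  have "y \<in> module.span sc {v. \<exists>c. P v = sc c v}"
    using periodic_linear_eigenvectors_span[OF P assms(2,3)] by simp
  then show "(br x ^^ 4) y = 0"
    by (rule ad4.eq_0_on_span[rotated]) (use on_eigenvectors in blast)
qed

end

theorem proposition5p11:
  fixes sc :: "complex \<Rightarrow> 'a::ab_group_add \<Rightarrow> 'a"
    and br :: "'a \<Rightarrow> 'a \<Rightarrow> 'a"
  assumes "complex_lie_algebra sc br"
    and "finite_dim sc"
    and "nilpotent_lie sc br"
    and "\<not> pre_engel4 sc br"
  shows "\<not> (\<exists>P. prederivation sc br P \<and> periodic P)"
proof
  assume "\<exists>P. prederivation sc br P \<and> periodic P"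
  then obtain P m where P: "prederivation sc br P" and "1 \<le> m" "P ^^ m = id"
    unfolding periodic_def by blast
  then have "0 < m" by simp
  have "Vector_Spaces.linear sc sc P"
    using P unfolding prederivation_def by blast
  then have eigenvectors_span: "module.span sc {x. \<exists>c. P x = sc c x} = UNIV"
    using periodic_linear_eigenvectors_span \<open>P ^^ m = id\<close> \<open>0 < m\<close> by blast
  have eigenvectors_engel: "{x. \<exists>c. P x = sc c x} \<subseteq> {x. br x ^^ 4 = (\<lambda>_. 0)}"
    using periodic_prederivation_eigenvector_ad4[OF assms(1) P \<open>P ^^ m = id\<close> \<open>0 < m\<close>] by blast
  interpret vector_space sc
    using lie_vector_space[OF assms(1)] .
  have "pre_engel4 sc br"
    unfolding pre_engel4_def using span_mono[OF eigenvectors_engel] eigenvectors_span by blast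
  with assms(4) show False by contradiction
qed

end
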